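(* Let $n\ge 3$ and let $\mathcal{B}$ be the set of bases of any rank-$3$ matroid on the ground set $\mathbb{Z}_n$ invariant under the translation action of $\mathbb{Z}_n$ (equivalently, corresponding to a three-dimensional tropical subrepresentation of $\mathbb{B}[\mathbb{Z}_n]$). Then for every unit $u\in\mathbb{Z}_n^\times$, $f_{u,2u}=\{\{a,a+u,a+2u\}\mid a\in\mathbb{Z}_n\}\subseteq\mathcal{B}$.
   Context: $\mathbb{Z}_n$ acts on $\binom{\mathbb{Z}_n}{3}$ by $x\cdot\{a,b,c\}=\{x+a,x+b,x+c\}$. For $i,j\in\mathbb{Z}_n$ with $0,i,j$ pairwise distinct, $f_{i,j}=\{\{a,a+i,a+j\}\mid a\in\mathbb{Z}_n\}$. $\mathbb{Z}_n^\times$ denotes the units of $\mathbb{Z}_n$. *)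

theory Defs
  imports Main
begin

text \<open>Z_n is modelled as {0..<n} :: nat set, with addition mod n.\<close>

definition Zn :: "nat \<Rightarrow> nat set" where
  "Zn n = {0..<n}"

definition matroid_bases :: "'a set \<Rightarrow> 'a set set \<Rightarrow> bool" where
  "matroid_bases E \<B> \<longleftrightarrow>
     \<B> \<noteq> {} \<and> (\<forall>B\<in>\<B>. B \<subseteq> E) \<and>
     (\<forall>B1\<in>\<B>. \<forall>B2\<in>\<B>. \<forall>x\<in>B1 - B2. \<exists>y\<in>B2 - B1. insert y (B1 - {x}) \<in> \<B>)"

definition rank_matroid_bases :: "'a set \<Rightarrow> 'a set set \<Rightarrow> nat \<Rightarrow> bool" where
  "rank_matroid_bases E \<B> r \<longleftrightarrow> matroid_bases E \<B> \<and> (\<forall>B\<in>\<B>. card B = r)"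

definition translate :: "nat \<Rightarrow> nat \<Rightarrow> nat set \<Rightarrow> nat set" where
  "translate n x B = (\<lambda>b. (x + b) mod n) ` B"

definition translation_invariant :: "nat \<Rightarrow> nat set set \<Rightarrow> bool" where
  "translation_invariant n \<B> \<longleftrightarrow> (\<forall>x\<in>Zn n. \<forall>B\<in>\<B>. translate n x B \<in> \<B>)"

definition units_Zn :: "nat \<Rightarrow> nat set" where
  "units_Zn n = {u\<in>Zn n. coprime u n}"

definition f_orbit :: "nat \<Rightarrow> nat \<Rightarrow> nat \<Rightarrow> nat set set" where
  "f_orbit n i j = {{a, (a + i) mod n, (a + j) mod n} | a. a \<in> Zn n}"

end

theory Submission
  imports Defs "HOL-Number_Theory.Cong"
begin

text \<open>Write \<open>s y = y + u\<close>. First, some basis contains a pair \<open>{y, s y}\<close>: otherwise, fixing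
  two elements \<open>p \<noteq> q\<close> of a basis, the exchange axiom shows that the set of \<open>y \<noteq> q\<close> lying in a
  common basis with \<open>q\<close> is closed under \<open>s\<close>; as \<open>u\<close> is a unit this set would contain \<open>q\<close> itself.
  Second, if some triple \<open>{y, s y, s (s y)}\<close> is not a basis, then by translation invariance none
  is. Take a basis \<open>{0, s 0, q}\<close>; exchanging into a basis containing \<open>{s y, s (s y)}\<close> shows that
  \<open>{y, s y, q}\<close> being a basis forces \<open>{s y, s (s y), q}\<close> to be one. Running around the orbit
  of \<open>s\<close> we reach \<open>s y = q\<close>, and \<open>{y, q, q}\<close> is too small to be a basis.\<close>

lemma closed_under_coprime_step_contains_all:
  fixes n u a z :: nat
  assumes "coprime u n" "a \<in> S" "a < n"
    and closed: "\<And>y. y \<in> S \<Longrightarrow> y < n \<Longrightarrow> (y + u) mod n \<in> S"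
    and "z < n"
  shows "z \<in> S"
proof -
  have orbit: "(a + i * u) mod n \<in> S" for i
  proof (induction i)
    case 0
    show ?case using assms by simp
  next
    case (Suc i)
    have "(a + Suc i * u) mod n = ((a + i * u) mod n + u) mod n"
      by (simp add: mod_simps ac_simps)
    then show ?case using Suc closed \<open>z < n\<close> by simp
  qed
  obtain v where v: "[u * v = 1] (mod n)"
    using cong_solve_coprime_nat[OF \<open>coprime u n\<close>] by auto
  have "(a + ((z + n - a) * v) * u) mod n = (a + (z + n - a) * ((u * v) mod n)) mod n"
    by (metis mod_add_right_eq mod_mult_right_eq mult.assoc mult.commute)
  also have "\<dots> = (a + (z + n - a) * (1 mod n)) mod n"
    using v by (simp add: cong_def)
  also have "\<dots> = z"
    using assms by (simp add: mod_simps)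
  finally show ?thesis using orbit by metis
qed

lemma add_mod_neq_self:
  fixes n u y :: nat
  assumes "coprime u n" "2 \<le> n" "y < n"
  shows "(y + u) mod n \<noteq> y"
proof
  assume "(y + u) mod n = y"
  then have "[y + u = y] (mod n)" using \<open>y < n\<close> by (simp add: cong_def)
  then have "n dvd u" by (simp add: cong_add_lcancel_0_nat cong_0_iff)
  then show False using assms(1,2) by auto
qed

lemma translate_translate: "translate n x (translate n y D) = translate n (x + y) D"
  by (auto simp: translate_def image_image mod_simps add.assoc)

lemma translate_mod: "translate n (x mod n) D = translate n x D"
  by (simp add: translate_def mod_simps)

lemma mod_add_complement:
  fixes n y z :: nat
  assumes "0 < n"
  shows "(z + (n - y mod n) + y) mod n = z mod n"
proof -
  have "z + (n - y mod n) + y = z + n * Suc (y div n)"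
    using mult_div_mod_eq[of n y] mod_less_divisor[OF assms, of y] by (simp only: mult_Suc_right)
  then show ?thesis by (simp only: mod_mult_self2)
qed

lemma translate_translate_complement:
  "0 < n \<Longrightarrow> translate n (z + (n - y mod n)) (translate n y D) = translate n z D"
  by (metis translate_translate translate_mod mod_add_complement)

lemma translate_pair: "y < n \<Longrightarrow> translate n y {0, u} = {y, (y + u) mod n}"
  by (simp add: translate_def)

lemma f_orbit_eq_translates:
  "f_orbit n u ((2 * u) mod n) = (\<lambda>a. translate n a {0, u, 2 * u}) ` Zn n"
  by (auto simp: f_orbit_def translate_def Zn_def mod_simps)

locale rank_matroid =
  fixes E :: "'a set" and \<B> :: "'a set set" and r :: nat
  assumes rank_bases: "rank_matroid_bases E \<B> r" and rank_pos: "0 < r"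
begin

lemma bases_nonempty: "\<B> \<noteq> {}"
  and basis_subset: "B \<in> \<B> \<Longrightarrow> B \<subseteq> E"
  and basis_card: "B \<in> \<B> \<Longrightarrow> card B = r"
  and basis_exchange: "B1 \<in> \<B> \<Longrightarrow> B2 \<in> \<B> \<Longrightarrow> x \<in> B1 - B2 \<Longrightarrow> \<exists>y\<in>B2 - B1. insert y (B1 - {x}) \<in> \<B>"
  using rank_bases by (auto simp: rank_matroid_bases_def matroid_bases_def)

lemma basis_finite: "B \<in> \<B> \<Longrightarrow> finite B"
  using basis_card rank_pos card.infinite by fastforce

lemma basis_augment:
  "B1 \<in> \<B> \<Longrightarrow> I \<subseteq> B1 \<Longrightarrow> B \<in> \<B> \<Longrightarrow> \<exists>B'\<in>\<B>. I \<subseteq> B' \<and> B' \<subseteq> I \<union> B"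
proof (induction "card (B1 - (I \<union> B))" arbitrary: B1 rule: less_induct)
  case less
  show ?case
  proof (cases "B1 \<subseteq> I \<union> B")
    case True
    then show ?thesis using less.prems by blast
  next
    case False
    then obtain z where z: "z \<in> B1" "z \<notin> I" "z \<notin> B" by blast
    then obtain y where y: "y \<in> B - B1" "insert y (B1 - {z}) \<in> \<B>"
      using basis_exchange less.prems by blast
    let ?B2 = "insert y (B1 - {z})"
    have "?B2 - (I \<union> B) = B1 - (I \<union> B) - {z}" using y z by auto
    then have "card (?B2 - (I \<union> B)) < card (B1 - (I \<union> B))"
      using z basis_finite[OF less.prems(1)] by (metis DiffI UnE card_Diff1_less finite_Diff)
    moreover have "I \<subseteq> ?B2" using less.prems z by auto
    ultimately show ?thesis using less.hyps y less.prems by blast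
  qed
qed

lemma basis_pair_exchange:
  assumes "B \<in> \<B>" "y \<in> B" "q \<in> B" "y \<noteq> q" "C \<in> \<B>" "w \<in> C"
    and no_yw: "\<not> (\<exists>B'\<in>\<B>. {y, w} \<subseteq> B')"
  shows "\<exists>B'\<in>\<B>. {w, q} \<subseteq> B'"
proof -
  obtain B' where B': "B' \<in> \<B>" "w \<in> B'" "B' \<subseteq> insert w B"
    using basis_augment[of C "{w}" B] assms by auto
  have "q \<in> B'"
  proof (rule ccontr)
    assume "q \<notin> B'"
    moreover have "y \<notin> B'" using no_yw B' by auto
    ultimately have "B' \<subseteq> insert w (B - {y, q})" using B' by auto
    then have "card B' \<le> card (insert w (B - {y, q}))"
      using basis_finite \<open>B \<in> \<B>\<close> by (intro card_mono) auto
    also have "\<dots> \<le> Suc (card B - 2)"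
      using assms basis_finite by (simp add: card_insert_if card_Diff_subset)
    moreover have "2 \<le> card B"
      using card_mono[OF basis_finite[OF \<open>B \<in> \<B>\<close>], of "{y, q}"] assms(2-4) by simp
    ultimately show False using basis_card B' \<open>B \<in> \<B>\<close> by fastforce
  qed
  then show ?thesis using B' by auto
qed

lemma basis_triple_exchange:
  assumes "r = 3" "{y, w, q} \<in> \<B>" "C \<in> \<B>" "{w, x} \<subseteq> C" "w \<noteq> x" "{y, w, x} \<notin> \<B>"
  shows "{w, x, q} \<in> \<B>"
proof -
  obtain B' where B': "B' \<in> \<B>" "{w, x} \<subseteq> B'" "B' \<subseteq> {w, x, y, q}"
    using basis_augment[OF assms(3,4,2)] by auto
  have "\<not> B' \<subseteq> {y, w, x}"
  proof
    assume "B' \<subseteq> {y, w, x}"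
    moreover have "card {y, w, x} \<le> card B'"
      using basis_card B' assms(1) by (simp add: card_insert_if)
    ultimately have "B' = {y, w, x}" by (intro card_seteq) auto
    then show False using B' assms(6) by simp
  qed
  then have "q \<in> B'" "q \<noteq> w" "q \<noteq> x" using B' by auto
  then have "{w, x, q} = B'"
    using B' basis_card basis_finite assms(1,5) by (intro card_seteq) auto
  then show ?thesis using B' by simp
qed

lemma rank3_basis_containing_pair:
  assumes "r = 3" "B \<in> \<B>" "{a, b} \<subseteq> B" "a \<noteq> b"
  obtains q where "B = {a, b, q}"
proof -
  have "\<not> B \<subseteq> {a, b}"
  proof
    assume "B \<subseteq> {a, b}"
    then have "card B \<le> card {a, b}" by (intro card_mono) auto
    also have "\<dots> \<le> 2" by (simp add: card_insert_if)
    finally show False using basis_card[OF \<open>B \<in> \<B>\<close>] assms(1) by simp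
  qed
  then obtain q where "q \<in> B" "q \<notin> {a, b}" by auto
  then have "{a, b, q} = B"
    using assms basis_card[OF \<open>B \<in> \<B>\<close>] basis_finite[OF \<open>B \<in> \<B>\<close>] by (intro card_seteq) auto
  then show ?thesis using that by blast
qed

end

locale cyclic_matroid = rank_matroid "Zn n" \<B> r for n :: nat and \<B> r +
  assumes invariant: "translation_invariant n \<B>"
begin

lemma basis_elem_less: "B \<in> \<B> \<Longrightarrow> x \<in> B \<Longrightarrow> x < n"
  using basis_subset[of B] by (auto simp: Zn_def)

lemma n_pos: "0 < n"
proof -
  obtain B where "B \<in> \<B>" using bases_nonempty by auto
  then have "B \<noteq> {}" using basis_card[of B] rank_pos by auto
  then show ?thesis using basis_elem_less \<open>B \<in> \<B>\<close> by fastforce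
qed

lemma translate_basis: "B \<in> \<B> \<Longrightarrow> translate n x B \<in> \<B>"
  using invariant n_pos mod_less_divisor[OF n_pos, of x] translate_mod[of n x B]
  by (metis Zn_def atLeastLessThan_iff translation_invariant_def zero_le)

lemma translate_basis_move:
  "translate n y D \<in> \<B> \<Longrightarrow> translate n z D \<in> \<B>"
  by (metis translate_basis translate_translate_complement n_pos)

lemma translate_subset_basis_move:
  "B \<in> \<B> \<Longrightarrow> translate n y D \<subseteq> B \<Longrightarrow> \<exists>B'\<in>\<B>. translate n z D \<subseteq> B'"
  by (metis image_mono translate_basis translate_def translate_translate_complement n_pos)

lemma elem_in_basis:
  assumes "x < n"
  shows "\<exists>B\<in>\<B>. x \<in> B"
proof -
  obtain B where "B \<in> \<B>" using bases_nonempty by auto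
  moreover have "B \<noteq> {}" using basis_card[OF \<open>B \<in> \<B>\<close>] rank_pos by auto
  then obtain p where "p \<in> B" by auto
  moreover have "translate n p {0} \<subseteq> B"
    using \<open>p \<in> B\<close> basis_elem_less[OF \<open>B \<in> \<B>\<close>] by (simp add: translate_def)
  ultimately have "\<exists>B'\<in>\<B>. translate n x {0} \<subseteq> B'" using translate_subset_basis_move by blast
  then show ?thesis using assms by (simp add: translate_def)
qed

lemma pair_in_basis:
  assumes "2 \<le> r" "coprime u n" "y < n"
  shows "\<exists>B\<in>\<B>. {y, (y + u) mod n} \<subseteq> B"
proof (rule ccontr)
  assume "\<not> ?thesis"
  then have no_pair: "\<not> (\<exists>B\<in>\<B>. {z, (z + u) mod n} \<subseteq> B)" if "z < n" for z
    using translate_subset_basis_move that \<open>y < n\<close> by (metis translate_pair)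
  obtain B0 where "B0 \<in> \<B>" using bases_nonempty by auto
  then have "2 \<le> card B0" using basis_card \<open>2 \<le> r\<close> by simp
  then obtain P where "P \<subseteq> B0" "card P = 2" by (rule obtain_subset_with_card_n)
  then obtain p q where pq: "p \<in> B0" "q \<in> B0" "p \<noteq> q"
    by (auto simp: card_2_iff)
  define Q where "Q = {z. z \<noteq> q \<and> (\<exists>B\<in>\<B>. {z, q} \<subseteq> B)}"
  have "z \<in> Q" if "z < n" for z
  proof (rule closed_under_coprime_step_contains_all[OF \<open>coprime u n\<close> _ _ _ that])
    show "p \<in> Q" "p < n" using pq \<open>B0 \<in> \<B>\<close> basis_elem_less by (auto simp: Q_def)
  next
    fix z assume "z \<in> Q" "z < n"
    then obtain B where B: "B \<in> \<B>" "z \<in> B" "q \<in> B" "z \<noteq> q" by (auto simp: Q_def)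
    let ?w = "(z + u) mod n"
    obtain C where "C \<in> \<B>" "?w \<in> C" using elem_in_basis[of ?w] n_pos by auto
    then have "\<exists>B'\<in>\<B>. {?w, q} \<subseteq> B'"
      using basis_pair_exchange[OF B] no_pair[OF \<open>z < n\<close>] by blast
    moreover have "?w \<noteq> q" using no_pair[OF \<open>z < n\<close>] B by auto
    ultimately show "?w \<in> Q" by (auto simp: Q_def)
  qed
  then show False using pq \<open>B0 \<in> \<B>\<close> basis_elem_less by (auto simp: Q_def)
qed

lemma triple_is_basis:
  assumes "r = 3" "coprime u n" "2 \<le> n"
  shows "translate n a {0, u, 2 * u} \<in> \<B>"
proof (rule ccontr)
  let ?s = "\<lambda>y. (y + u) mod n"
  have triple: "translate n y {0, u, 2 * u} = {y, ?s y, ?s (?s y)}" if "y < n" for y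
    using that by (auto simp: translate_def mod_simps mult_2 add.assoc)
  assume "translate n a {0, u, 2 * u} \<notin> \<B>"
  then have no_triple: "{y, ?s y, ?s (?s y)} \<notin> \<B>" if "y < n" for y
    using translate_basis_move[of y "{0, u, 2 * u}" a] triple[OF that] by auto
  have step_ne: "?s y \<noteq> y" if "y < n" for y
    using add_mod_neq_self[OF \<open>coprime u n\<close> \<open>2 \<le> n\<close> that] .
  obtain B where B: "B \<in> \<B>" "{0, ?s 0} \<subseteq> B"
    using pair_in_basis[of u 0] assms n_pos by auto
  then obtain q where "B = {0, ?s 0, q}"
    using rank3_basis_containing_pair[OF \<open>r = 3\<close>] step_ne[OF n_pos] by metis
  then have "{0, ?s 0, q} \<in> \<B>" "q < n" using B basis_elem_less by auto
  define T where "T = {y. {y, ?s y, q} \<in> \<B>}"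
  have "y \<in> T" if "y < n" for y
  proof (rule closed_under_coprime_step_contains_all[OF \<open>coprime u n\<close> _ n_pos _ that])
    show "0 \<in> T" using \<open>{0, ?s 0, q} \<in> \<B>\<close> by (simp add: T_def)
  next
    fix y assume "y \<in> T" "y < n"
    obtain C where "C \<in> \<B>" "{?s y, ?s (?s y)} \<subseteq> C"
      using pair_in_basis[of u "?s y"] assms n_pos by auto
    moreover have "{y, ?s y, q} \<in> \<B>" using \<open>y \<in> T\<close> by (simp add: T_def)
    moreover have "?s y \<noteq> ?s (?s y)" using step_ne[of "?s y"] n_pos by simp
    ultimately have "{?s y, ?s (?s y), q} \<in> \<B>"
      using basis_triple_exchange[OF \<open>r = 3\<close>] no_triple[OF \<open>y < n\<close>] by blast
    then show "?s y \<in> T" by (simp add: T_def)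
  qed
  define y where "y = (q + (n - u mod n)) mod n"
  have "?s y = q"
    using mod_add_complement[OF n_pos, of q u] \<open>q < n\<close> by (simp add: y_def mod_add_left_eq)
  moreover have "y \<in> T" using \<open>\<And>y. y < n \<Longrightarrow> y \<in> T\<close> n_pos by (simp add: y_def)
  ultimately have "{y, q} \<in> \<B>" by (simp add: T_def)
  then show False using basis_card[of "{y, q}"] assms(1) by (simp add: card_insert_if split: if_splits)
qed

end

theorem mainTheorem14:
  fixes n :: nat and \<B> :: "nat set set"
  assumes "n \<ge> 3"
    and "rank_matroid_bases (Zn n) \<B> 3"
    and "translation_invariant n \<B>"
    and "u \<in> units_Zn n"
  shows "f_orbit n u ((2 * u) mod n) \<subseteq> \<B>"
proof -
  interpret cyclic_matroid n \<B> 3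
    using assms(2,3) by unfold_locales simp_all
  have "coprime u n" using assms(4) by (simp add: units_Zn_def)
  then show ?thesis
    using triple_is_basis assms(1) by (auto simp: f_orbit_eq_translates)
qed

end
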